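(* For the matching model described in the context, provided the normalising sum is finite, the stationary distribution of the token state descriptor is $$\pi((T_1,n_1,\dots,T_i,n_i))=\pi((0))\prod_{j=1}^i\frac{\lambda_{T_j}}{A(j)\sum_{m=1}^j\lambda_{T_m}}\Big(\frac{\sum_{m=1}^j\lambda_{T_m}}{F_j(T_1,\dots,T_j)}\Big)^{n_j+1}\prod_{m=1}^{\sum_{l=1}^i n_l}\frac1{A(i+m)},$$ for all $i$, distinct $T_1,\dots,T_i$ and $n_j\in\mathbb N_0$, with $\pi((0))$ the normalising constant.
   Context: Parallel FCFS matching model: customer types $c_1,\dots,c_K$, type $c_l$ arriving as an independent Poisson process with rate $\lambda_{t_l}>0$; a finite set of server types, each compatible with some customer types. When $n$ customers are waiting, servers of each server type arrive (independently) at rate $A(n)>0$ ($n\ge1$). An arriving server is matched with the longest-waiting compatible customer, and both leave; if none, the server leaves immediately. Token representation: token $t_l$ corresponds to type $c_l$ and is held by the oldest type-$c_l$ customer waiting. State: $(0)$ or $(T_1,n_1,\dots,T_i,n_i)$ with $T_1,\dots,T_i$ the distinct held tokens ordered by arrival of their holders and $n_j$ the number of non-holding customers arriving between holders of $T_j$ and $T_{j+1}$ (after the holder of $T_i$ for $j=i$). $F_j(T_1,\dots,T_j)$ denotes the number of server types compatible with at least one of the customer types corresponding to $T_1,\dots,T_j$, assumed positive for nonempty tuples. *)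

theory Defs
  imports "HOL-Analysis.Analysis"
begin

text \<open>Customer types are the naturals below K (type c_l is l); server types are
  the elements of a finite set S of an arbitrary type; cp s c means server
  type s can serve customer type c.  A customer-level state is the list of the
  types of the waiting customers in order of arrival (oldest first).\<close>

definition serve :: "('s \<Rightarrow> nat \<Rightarrow> bool) \<Rightarrow> 's \<Rightarrow> nat list \<Rightarrow> nat list option" where
  "serve cp s xs =
     (let pre = takeWhile (\<lambda>c. \<not> cp s c) xs;
          rest = dropWhile (\<lambda>c. \<not> cp s c) xs
      in if rest = [] then None else Some (pre @ tl rest))"

text \<open>Global balance equations of the customer-level continuous-time Markov
  chain on lists over {..<K}: arrivals of type c at rate lam c (appended at the
  end); each server type arrives at rate A n when n customers wait.
  Outflow of x = inflow into x (self-loops, i.e. servers finding no compatible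
  customer, do not change the state and are omitted on both sides).\<close>
definition balance_holds ::
  "nat \<Rightarrow> (nat \<Rightarrow> real) \<Rightarrow> (nat \<Rightarrow> real) \<Rightarrow> 's set \<Rightarrow> ('s \<Rightarrow> nat \<Rightarrow> bool)
   \<Rightarrow> (nat list \<Rightarrow> real) \<Rightarrow> bool" where
  "balance_holds K lam A S cp p \<longleftrightarrow>
    (\<forall>x \<in> lists {..<K}.
       p x * ((\<Sum>c<K. lam c) + A (length x) * real (card {s \<in> S. serve cp s x \<noteq> None}))
       = (if x = [] then 0 else p (butlast x) * lam (last x))
         + (\<Sum>y \<in> {y \<in> lists {..<K}. length y = Suc (length x)}.
              p y * A (length y) * real (card {s \<in> S. serve cp s y = Some x})))"

definition stationary_dist ::
  "nat \<Rightarrow> (nat \<Rightarrow> real) \<Rightarrow> (nat \<Rightarrow> real) \<Rightarrow> 's set \<Rightarrow> ('s \<Rightarrow> nat \<Rightarrow> bool)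
   \<Rightarrow> (nat list \<Rightarrow> real) \<Rightarrow> bool" where
  "stationary_dist K lam A S cp p \<longleftrightarrow>
    (\<forall>x \<in> lists {..<K}. 0 \<le> p x) \<and> p summable_on (lists {..<K})
    \<and> infsum p (lists {..<K}) = 1 \<and> balance_holds K lam A S cp p"

text \<open>Token state descriptor: list of pairs (T_j, n_j); the empty list is the
  state (0).  Built by scanning the queue from oldest to youngest: a customer
  whose type has no token yet becomes the holder of a new token; otherwise it is a
  non-holding customer counted in the block of the most recent holder.\<close>
definition tok_step :: "(nat \<times> nat) list \<Rightarrow> nat \<Rightarrow> (nat \<times> nat) list" where
  "tok_step acc c =
     (if c \<in> fst ` set acc then butlast acc @ [(fst (last acc), Suc (snd (last acc)))]
      else acc @ [(c, 0)])"

definition token_state :: "nat list \<Rightarrow> (nat \<times> nat) list" where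
  "token_state xs = foldl tok_step [] xs"

definition token_states :: "nat \<Rightarrow> (nat \<times> nat) list set" where
  "token_states K = {ts. distinct (map fst ts) \<and> set (map fst ts) \<subseteq> {..<K}}"

definition Fnum :: "'s set \<Rightarrow> ('s \<Rightarrow> nat \<Rightarrow> bool) \<Rightarrow> nat list \<Rightarrow> nat" where
  "Fnum S cp Ts = card {s \<in> S. \<exists>T \<in> set Ts. cp s T}"

definition Lam :: "(nat \<Rightarrow> real) \<Rightarrow> (nat \<times> nat) list \<Rightarrow> nat \<Rightarrow> real" where
  "Lam lam ts j = (\<Sum>m<j. lam (fst (ts ! m)))"

text \<open>Unnormalised product-form weight (pi(ts)/pi((0))).\<close>
definition weight ::
  "(nat \<Rightarrow> real) \<Rightarrow> (nat \<Rightarrow> real) \<Rightarrow> 's set \<Rightarrow> ('s \<Rightarrow> nat \<Rightarrow> bool)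
   \<Rightarrow> (nat \<times> nat) list \<Rightarrow> real" where
  "weight lam A S cp ts =
     (\<Prod>j\<in>{1..length ts}.
        lam (fst (ts ! (j - 1))) / (A j * Lam lam ts j)
        * (Lam lam ts j / real (Fnum S cp (map fst (take j ts)))) ^ (snd (ts ! (j - 1)) + 1))
     * (\<Prod>m\<in>{1..sum_list (map snd ts)}. 1 / A (length ts + m))"

end

theory Submission
  imports Defs
begin

text \<open>The customer-level chain has the product-form stationary measure
  q(c_1 \<dots> c_n) = \<Prod>_i \<lambda>_{c_i} / (A(i) F(c_1 \<dots> c_i)). It satisfies two partial balance
  equations: the flow out of a queue x by a service equals the flow into x by the arrival of its
  last customer, and the flow out of x by arrivals equals the flow into x by services, since the
  queues served into x are x with one customer inserted and the corresponding numbers of servers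
  telescope in F. Summing q over the queues with a given token state yields the product formula:
  each non-holding customer in the block of T_j may have any of the types T_1, \<dots>, T_j, which
  contributes the factor (\<Sum>_{m \<le> j} \<lambda>_{T_m}) / F_j.\<close>

section \<open>Serving a queue\<close>

definition compatible_servers :: "'s set \<Rightarrow> ('s \<Rightarrow> nat \<Rightarrow> bool) \<Rightarrow> nat list \<Rightarrow> 's set" where
  "compatible_servers S cp Ts = {s \<in> S. \<exists>T \<in> set Ts. cp s T}"

lemma card_compatible_servers: "card (compatible_servers S cp Ts) = Fnum S cp Ts"
  by (simp add: compatible_servers_def Fnum_def)

lemma Fnum_cong_set: "set Ts = set Ts' \<Longrightarrow> Fnum S cp Ts = Fnum S cp Ts'"
  by (simp add: Fnum_def)

lemma Fnum_Nil [simp]: "Fnum S cp [] = 0"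
  by (simp add: Fnum_def)

lemma serve_neq_None_iff: "serve cp s x \<noteq> None \<longleftrightarrow> (\<exists>c \<in> set x. cp s c)"
  by (simp add: serve_def Let_def dropWhile_eq_Nil_conv)

lemma card_serve_neq_None: "card {s \<in> S. serve cp s x \<noteq> None} = Fnum S cp x"
  using serve_neq_None_iff[of cp _ x] by (simp add: Fnum_def)

definition insert_at :: "nat \<Rightarrow> 'a \<Rightarrow> 'a list \<Rightarrow> 'a list" where
  "insert_at k c x = take k x @ c # drop k x"

lemma length_insert_at [simp]: "k \<le> length x \<Longrightarrow> length (insert_at k c x) = Suc (length x)"
  by (simp add: insert_at_def)

lemma insert_at_length [simp]: "insert_at (length x) c x = x @ [c]"
  by (simp add: insert_at_def)

lemma set_insert_at [simp]: "set (insert_at k c x) = insert c (set x)"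
  by (metis insert_at_def append_take_drop_id set_append list.set(2) Un_insert_right)

lemma serve_insert_at:
  assumes "cp s c" and "\<forall>c' \<in> set (take k x). \<not> cp s c'"
  shows "takeWhile (\<lambda>c. \<not> cp s c) (insert_at k c x) = take k x"
    and "dropWhile (\<lambda>c. \<not> cp s c) (insert_at k c x) = c # drop k x"
    and "serve cp s (insert_at k c x) = Some x"
  using assms
  by (simp_all add: insert_at_def takeWhile_append2 dropWhile_append2 serve_def Let_def)

lemma serve_eq_SomeE:
  assumes "serve cp s y = Some x"
  obtains k c where "k \<le> length x" "cp s c" "\<forall>c' \<in> set (take k x). \<not> cp s c'"
    "y = insert_at k c x"
proof -
  define pre where "pre = takeWhile (\<lambda>c. \<not> cp s c) y"
  define rest where "rest = dropWhile (\<lambda>c. \<not> cp s c) y"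
  have "rest \<noteq> []" and x: "x = pre @ tl rest"
    using assms by (auto simp: serve_def Let_def pre_def rest_def split: if_splits)
  moreover from \<open>rest \<noteq> []\<close> have "cp s (hd rest)"
    unfolding rest_def using hd_dropWhile by blast
  moreover have "\<forall>c' \<in> set (take (length pre) x). \<not> cp s c'"
    unfolding x pre_def by (auto dest: set_takeWhileD)
  moreover have "y = insert_at (length pre) (hd rest) x"
    using \<open>rest \<noteq> []\<close> by (simp add: x insert_at_def pre_def rest_def)
  ultimately show ?thesis
    using that[of "length pre" "hd rest"] by (simp add: x)
qed

lemma real_card_compatible_servers_diff:
  assumes "finite S"
  shows "real (card (compatible_servers S cp (xs @ ys) - compatible_servers S cp xs))
    = real (Fnum S cp (xs @ ys)) - real (Fnum S cp xs)"
proof -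
  have sub: "compatible_servers S cp xs \<subseteq> compatible_servers S cp (xs @ ys)"
    by (auto simp: compatible_servers_def)
  moreover have "finite (compatible_servers S cp (xs @ ys))"
    using assms by (simp add: compatible_servers_def)
  ultimately show ?thesis
    by (simp add: card_Diff_subset card_mono of_nat_diff finite_subset
        flip: card_compatible_servers)
qed

text \<open>The customer states from which one service leads to x are exactly x with one
  customer c inserted at some position k, served by a server compatible with c but with
  none of the k customers ahead of it.\<close>
lemma bij_betw_insert_at_serve:
  assumes "set x \<subseteq> {..<K}"
  shows "bij_betw (\<lambda>((c, k), s). (insert_at k c x, s))
    (SIGMA (c, k):{..<K} \<times> {..length x}.
       compatible_servers S cp (take k x @ [c]) - compatible_servers S cp (take k x))
    (SIGMA y:{y \<in> lists {..<K}. length y = Suc (length x)}. {s \<in> S. serve cp s y = Some x})"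
    (is "bij_betw ?f ?D ?B")
proof -
  have "inj_on ?f ?D"
  proof (rule inj_onI)
    fix a b assume a: "a \<in> ?D" and b: "b \<in> ?D" and eq: "?f a = ?f b"
    obtain c k s c' k' s' where ab: "a = ((c, k), s)" "b = ((c', k'), s')"
      by (metis prod.exhaust)
    with eq have "s' = s" and ins: "insert_at k c x = insert_at k' c' x"
      by simp_all
    with ab a b have "k \<le> length x" "k' \<le> length x"
      and c: "cp s c" "\<forall>d \<in> set (take k x). \<not> cp s d"
      and c': "cp s c'" "\<forall>d \<in> set (take k' x). \<not> cp s d"
      by (auto simp: compatible_servers_def)
    have "take k x = take k' x" "c # drop k x = c' # drop k' x"
      using serve_insert_at(1,2)[of cp s c k x, OF c] serve_insert_at(1,2)[of cp s c' k' x, OF c'] ins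
      by simp_all
    with \<open>k \<le> length x\<close> \<open>k' \<le> length x\<close> show "a = b"
      by (auto simp: ab \<open>s' = s\<close> dest: arg_cong[where f = length])
  qed
  moreover have "?f ` ?D \<subseteq> ?B"
    using assms by (auto simp: compatible_servers_def serve_insert_at(3))
  moreover have "?B \<subseteq> ?f ` ?D"
  proof
    fix z assume "z \<in> ?B"
    then obtain y s where z: "z = (y, s)" and y: "y \<in> lists {..<K}" and "s \<in> S"
      and "serve cp s y = Some x"
      by auto
    from \<open>serve cp s y = Some x\<close> obtain k c where "k \<le> length x" "cp s c" "\<forall>d \<in> set (take k x). \<not> cp s d"
      and yx: "y = insert_at k c x"
      by (rule serve_eq_SomeE)
    moreover have "c < K" using y by (auto simp: yx)
    ultimately show "z \<in> ?f ` ?D"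
      using \<open>s \<in> S\<close> by (force simp: z compatible_servers_def)
  qed
  ultimately show ?thesis by (auto simp: bij_betw_def)
qed

lemma sum_service_inflow:
  fixes q :: "nat list \<Rightarrow> real"
  assumes "finite S" and "set x \<subseteq> {..<K}"
  shows "(\<Sum>y \<in> {y \<in> lists {..<K}. length y = Suc (length x)}.
            q y * A (length y) * real (card {s \<in> S. serve cp s y = Some x}))
    = A (Suc (length x)) * (\<Sum>c<K. \<Sum>k\<le>length x.
        q (insert_at k c x) * (real (Fnum S cp (take k x @ [c])) - real (Fnum S cp (take k x))))"
proof -
  define Y where "Y = {y \<in> lists {..<K}. length y = Suc (length x)}"
  define B where "B y = {s \<in> S. serve cp s y = Some x}" for y
  define N where "N = (\<lambda>(c, k). compatible_servers S cp (take k x @ [c]) - compatible_servers S cp (take k x))"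
  have "finite Y"
    by (rule finite_subset[OF _ finite_lists_length_eq[of "{..<K}" "Suc (length x)"]])
      (auto simp: Y_def)
  have "finite (B y)" "finite (N ck)" for y ck
    using assms(1) by (auto simp: B_def N_def compatible_servers_def split: prod.split)
  have "(\<Sum>y \<in> Y. q y * A (length y) * real (card (B y))) = (\<Sum>y \<in> Y. \<Sum>s \<in> B y. q y * A (Suc (length x)))"
    by (intro sum.cong) (auto simp: Y_def)
  also have "\<dots> = (\<Sum>(y, s) \<in> Sigma Y B. q y * A (Suc (length x)))"
    using \<open>finite Y\<close> \<open>finite (B _)\<close> by (subst sum.Sigma) auto
  also have "\<dots> = (\<Sum>((c, k), s) \<in> Sigma ({..<K} \<times> {..length x}) N. q (insert_at k c x) * A (Suc (length x)))"
    using sum.reindex_bij_betw[OF bij_betw_insert_at_serve[OF assms(2), where S = S and cp = cp],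
        of "\<lambda>(y, s). q y * A (Suc (length x))", folded Y_def B_def]
    by (simp add: N_def split_def case_prod_unfold)
  also have "\<dots> = (\<Sum>(c, k) \<in> {..<K} \<times> {..length x}. \<Sum>s \<in> N (c, k). q (insert_at k c x) * A (Suc (length x)))"
    using sum.Sigma[of "{..<K} \<times> {..length x}" N "\<lambda>(c, k) s. q (insert_at k c x) * A (Suc (length x))"]
      \<open>finite (N _)\<close> by (simp add: split_def)
  also have "\<dots> = (\<Sum>(c, k) \<in> {..<K} \<times> {..length x}. A (Suc (length x)) *
      (q (insert_at k c x) * (real (Fnum S cp (take k x @ [c])) - real (Fnum S cp (take k x)))))"
    using real_card_compatible_servers_diff[OF assms(1)] by (intro sum.cong) (auto simp: N_def)
  finally show ?thesis
    by (simp add: Y_def B_def sum.cartesian_product[symmetric] sum_distrib_left)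
qed

section \<open>Normalising a balanced measure\<close>

lemma balance_holds_divide:
  "balance_holds K lam A S cp q \<Longrightarrow> balance_holds K lam A S cp (\<lambda>x. q x / Z)"
  unfolding balance_holds_def
  by (auto simp: add_divide_distrib sum_divide_distrib
      dest!: bspec arg_cong[where f = "\<lambda>t. t / Z"])

lemma stationary_dist_normalise:
  assumes "\<forall>x \<in> lists {..<K}. 0 \<le> q x" and "(q has_sum Z) (lists {..<K})" and "Z > 0"
    and "balance_holds K lam A S cp q"
  shows "stationary_dist K lam A S cp (\<lambda>x. q x / Z)"
proof -
  have "((\<lambda>x. q x / Z) has_sum 1) (lists {..<K})"
    using has_sum_divide_const[OF assms(2), of Z] \<open>Z > 0\<close> by simp
  then show ?thesis
    using assms by (auto simp: stationary_dist_def balance_holds_divide summable_on_def infsumI)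
qed

lemma has_sum_Union_disjoint_family:
  fixes f :: "'a \<Rightarrow> real"
  assumes "\<And>i. i \<in> I \<Longrightarrow> (f has_sum w i) (B i)" and "w summable_on I"
    and "\<And>i x. i \<in> I \<Longrightarrow> x \<in> B i \<Longrightarrow> 0 \<le> f x" and "disjoint_family_on B I"
  shows "(f has_sum infsum w I) (\<Union>i \<in> I. B i)"
proof -
  have "f summable_on (\<Union>i \<in> I. B i)"
    by (rule summable_on_UnionI[OF assms])
  moreover have "inj_on snd (Sigma I B)"
    using assms(4) by (force simp: disjoint_family_on_def intro: inj_onI)
  moreover have "(\<Union>i \<in> I. B i) = snd ` Sigma I B" by force
  ultimately have "((f \<circ> snd) has_sum infsum f (\<Union>i \<in> I. B i)) (Sigma I B)"
    by (metis has_sum_infsum has_sum_reindex)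
  then have "(w has_sum infsum f (\<Union>i \<in> I. B i)) I"
    by (rule has_sum_Sigma') (use assms(1) in \<open>simp add: comp_def\<close>)
  then show ?thesis
    using \<open>f summable_on _\<close> by (metis has_sum_infsum infsumI)
qed

section \<open>Token states\<close>

lemma token_state_Nil [simp]: "token_state [] = []"
  by (simp add: token_state_def)

lemma token_state_snoc: "token_state (xs @ [c]) = tok_step (token_state xs) c"
  by (simp add: token_state_def)

lemma tok_step_old_token:
  assumes "c \<in> fst ` set acc"
  shows "tok_step acc c = butlast acc @ [(fst (last acc), Suc (snd (last acc)))]"
    and "map fst (tok_step acc c) = map fst acc"
proof -
  show eq: "tok_step acc c = butlast acc @ [(fst (last acc), Suc (snd (last acc)))]"
    using assms by (simp add: tok_step_def)
  from assms have "acc = butlast acc @ [last acc]" by (metis append_butlast_last_id empty_iff image_empty list.set(1))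
  then show "map fst (tok_step acc c) = map fst acc"
    unfolding eq by (metis (no_types, lifting) fst_conv list.simps(8,9) map_append)
qed

lemma tok_step_new_token: "c \<notin> fst ` set acc \<Longrightarrow> tok_step acc c = acc @ [(c, 0)]"
  by (simp add: tok_step_def)

lemma tokens_token_state: "fst ` set (token_state xs) = set xs"
proof (induction xs rule: rev_induct)
  case (snoc c xs)
  show ?case
  proof (cases "c \<in> fst ` set (token_state xs)")
    case True
    then have "fst ` set (tok_step (token_state xs) c) = fst ` set (token_state xs)"
      by (metis list.set_map tok_step_old_token(2))
    with True snoc.IH show ?thesis by (auto simp: token_state_snoc)
  next
    case False
    with snoc.IH show ?thesis by (auto simp: token_state_snoc tok_step_new_token)
  qed
qed simp

lemma distinct_tokens_token_state: "distinct (map fst (token_state xs))"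
proof (induction xs rule: rev_induct)
  case (snoc c xs)
  then show ?case
    by (cases "c \<in> fst ` set (token_state xs)")
      (auto simp: token_state_snoc tok_step_new_token tok_step_old_token(2))
qed simp

lemma length_eq_token_state:
  "length xs = length (token_state xs) + sum_list (map snd (token_state xs))"
proof (induction xs rule: rev_induct)
  case (snoc c xs)
  show ?case
  proof (cases "c \<in> fst ` set (token_state xs)")
    case True
    define acc where "acc = token_state xs"
    from True have "acc \<noteq> []" by (auto simp: acc_def)
    then have split: "acc = butlast acc @ [last acc]" by simp
    have "sum_list (map snd acc) = sum_list (map snd (butlast acc)) + snd (last acc)"
      by (subst split) simp
    with True snoc.IH \<open>acc \<noteq> []\<close> show ?thesis
      by (simp add: token_state_snoc tok_step_old_token(1) flip: acc_def)
  next
    case False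
    with snoc.IH show ?thesis by (simp add: token_state_snoc tok_step_new_token)
  qed
qed simp

lemma token_state_in_token_states: "xs \<in> lists {..<K} \<Longrightarrow> token_state xs \<in> token_states K"
  using tokens_token_state[of xs] distinct_tokens_token_state[of xs]
  by (auto simp: token_states_def)

definition token_fibre :: "nat \<Rightarrow> (nat \<times> nat) list \<Rightarrow> nat list set" where
  "token_fibre K ts = {xs \<in> lists {..<K}. token_state xs = ts}"

lemma finite_token_fibre: "finite (token_fibre K ts)"
  by (rule finite_subset[OF _ finite_lists_length_eq[of "{..<K}" "length ts + sum_list (map snd ts)"]])
    (auto simp: token_fibre_def length_eq_token_state)

lemma token_state_eq_Nil_iff: "token_state xs = [] \<longleftrightarrow> xs = []"
  using tokens_token_state[of xs] by auto

lemma token_fibre_Nil: "token_fibre K [] = {[]}"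
  by (auto simp: token_fibre_def token_state_eq_Nil_iff)

lemma lists_eq_Union_token_fibre: "lists {..<K} = (\<Union>ts \<in> token_states K. token_fibre K ts)"
  using token_state_in_token_states by (fastforce simp: token_fibre_def)

lemma disjoint_family_token_fibre: "disjoint_family_on (token_fibre K) I"
  by (auto simp: disjoint_family_on_def token_fibre_def)

lemma token_fibre_new_token:
  assumes "T \<notin> fst ` set ts" and "T < K"
  shows "token_fibre K (ts @ [(T, 0)]) = (\<lambda>xs. xs @ [T]) ` token_fibre K ts"
proof (intro subset_antisym subsetI)
  fix ys assume ys: "ys \<in> token_fibre K (ts @ [(T, 0)])"
  then have "ys \<noteq> []" by (auto simp: token_fibre_def)
  then obtain xs c where ys_eq: "ys = xs @ [c]" by (metis rev_exhaust)
  have t: "tok_step (token_state xs) c = ts @ [(T, 0)]"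
    using ys by (simp add: token_fibre_def ys_eq token_state_snoc)
  have "c \<notin> fst ` set (token_state xs)"
  proof
    assume "c \<in> fst ` set (token_state xs)"
    then have "snd (last (tok_step (token_state xs) c)) \<noteq> 0"
      by (simp add: tok_step_old_token(1))
    with t show False by simp
  qed
  with t have "token_state xs = ts" "c = T" by (auto simp: tok_step_new_token)
  with ys show "ys \<in> (\<lambda>xs. xs @ [T]) ` token_fibre K ts"
    by (auto simp: token_fibre_def ys_eq)
next
  fix ys assume "ys \<in> (\<lambda>xs. xs @ [T]) ` token_fibre K ts"
  with assms show "ys \<in> token_fibre K (ts @ [(T, 0)])"
    by (auto simp: token_fibre_def token_state_snoc tok_step_new_token)
qed

lemma token_fibre_extend_block:
  assumes "fst ` set (ts @ [(T, m)]) \<subseteq> {..<K}"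
  shows "token_fibre K (ts @ [(T, Suc m)])
    = (\<lambda>(xs, c). xs @ [c]) ` (token_fibre K (ts @ [(T, m)]) \<times> fst ` set (ts @ [(T, m)]))"
proof (intro subset_antisym subsetI)
  fix ys assume ys: "ys \<in> token_fibre K (ts @ [(T, Suc m)])"
  then have "ys \<noteq> []" by (auto simp: token_fibre_def)
  then obtain xs c where ys_eq: "ys = xs @ [c]" by (metis rev_exhaust)
  have t: "tok_step (token_state xs) c = ts @ [(T, Suc m)]"
    using ys by (simp add: token_fibre_def ys_eq token_state_snoc)
  have c: "c \<in> fst ` set (token_state xs)"
  proof (rule ccontr)
    assume "c \<notin> fst ` set (token_state xs)"
    then have "snd (last (tok_step (token_state xs) c)) = 0"
      by (simp add: tok_step_new_token)
    with t show False by simp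
  qed
  with t have "butlast (token_state xs) = ts" "last (token_state xs) = (T, m)"
    by (auto simp: tok_step_old_token(1) prod_eq_iff)
  with c have "token_state xs = ts @ [(T, m)]"
    by (metis append_butlast_last_id empty_iff image_empty list.set(1))
  with ys c show "ys \<in> (\<lambda>(xs, c). xs @ [c]) ` (token_fibre K (ts @ [(T, m)]) \<times> fst ` set (ts @ [(T, m)]))"
    by (auto simp: token_fibre_def ys_eq)
next
  fix ys assume "ys \<in> (\<lambda>(xs, c). xs @ [c]) ` (token_fibre K (ts @ [(T, m)]) \<times> fst ` set (ts @ [(T, m)]))"
  then obtain xs c where "ys = xs @ [c]" "xs \<in> token_fibre K (ts @ [(T, m)])"
    and "c \<in> fst ` set (ts @ [(T, m)])"
    by auto
  with assms show "ys \<in> token_fibre K (ts @ [(T, Suc m)])"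
    by (auto simp: token_fibre_def token_state_snoc tok_step_old_token(1) simp del: set_append)
qed

lemma Lam_append_le: "j \<le> length ts \<Longrightarrow> Lam lam (ts @ us) j = Lam lam ts j"
  unfolding Lam_def by (intro sum.cong) (auto simp: nth_append)

lemma Lam_snoc_length: "Lam lam (ts @ [p]) (Suc (length ts)) = Lam lam ts (length ts) + lam (fst p)"
  by (simp add: Lam_def nth_append)

lemma Lam_length_eq_sum_tokens:
  "distinct (map fst ts) \<Longrightarrow> Lam lam ts (length ts) = (\<Sum>c \<in> fst ` set ts. lam c)"
proof (induction ts rule: rev_induct)
  case (snoc p ts)
  then show ?case
    using Lam_snoc_length[of lam ts p] by (auto simp: add.commute)
qed (simp add: Lam_def)

lemma set_token_fibre: "xs \<in> token_fibre K ts \<Longrightarrow> set xs = fst ` set ts"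
  using tokens_token_state by (auto simp: token_fibre_def)

section \<open>The product-form measure\<close>

locale fcfs_matching =
  fixes K :: nat and lam :: "nat \<Rightarrow> real" and A :: "nat \<Rightarrow> real"
    and S :: "'s set" and cp :: "'s \<Rightarrow> nat \<Rightarrow> bool"
  assumes finite_S: "finite S"
    and lam_pos: "\<And>c. c < K \<Longrightarrow> lam c > 0"
    and A_pos: "\<And>n. n \<ge> 1 \<Longrightarrow> A n > 0"
    and Fnum_pos: "\<And>Ts. Ts \<noteq> [] \<Longrightarrow> set Ts \<subseteq> {..<K} \<Longrightarrow> Fnum S cp Ts > 0"
begin

abbreviation F :: "nat list \<Rightarrow> real" where
  "F Ts \<equiv> real (Fnum S cp Ts)"

definition type_weight :: "nat list \<Rightarrow> real" where
  "type_weight xs = (\<Prod>i<length xs. lam (xs ! i) / F (take (Suc i) xs))"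

definition inv_rate_prod :: "nat \<Rightarrow> real" where
  "inv_rate_prod n = (\<Prod>k \<in> {1..n}. 1 / A k)"

text \<open>The factor of service rates is split off because all queues with the same token state
  have the same length.\<close>
definition cust_weight :: "nat list \<Rightarrow> real" where
  "cust_weight xs = type_weight xs * inv_rate_prod (length xs)"

lemma F_pos: "xs \<noteq> [] \<Longrightarrow> set xs \<subseteq> {..<K} \<Longrightarrow> F xs > 0"
  using Fnum_pos by simp

lemma type_weight_Nil [simp]: "type_weight [] = 1"
  by (simp add: type_weight_def)

lemma type_weight_snoc: "type_weight (xs @ [c]) = type_weight xs * lam c / F (xs @ [c])"
proof -
  have "(\<Prod>i<length xs. lam ((xs @ [c]) ! i) / F (take (Suc i) (xs @ [c]))) = type_weight xs"
    unfolding type_weight_def by (intro prod.cong) (auto simp: nth_append)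
  then show ?thesis by (simp add: type_weight_def)
qed

lemma type_weight_nonneg: "set xs \<subseteq> {..<K} \<Longrightarrow> type_weight xs \<ge> 0"
  unfolding type_weight_def using lam_pos
  by (intro prod_nonneg divide_nonneg_nonneg) (auto simp: subset_iff less_imp_le)

lemma inv_rate_prod_Suc: "inv_rate_prod (Suc n) = inv_rate_prod n / A (Suc n)"
  by (simp add: inv_rate_prod_def prod.cl_ivl_Suc)

lemma inv_rate_prod_pos: "inv_rate_prod n > 0"
  unfolding inv_rate_prod_def using A_pos by (intro prod_pos) auto

lemma inv_rate_prod_add: "inv_rate_prod i * (\<Prod>m \<in> {1..s}. 1 / A (i + m)) = inv_rate_prod (i + s)"
  by (induction s) (simp_all add: prod.cl_ivl_Suc inv_rate_prod_Suc)

lemma cust_weight_Nil [simp]: "cust_weight [] = 1"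
  by (simp add: cust_weight_def inv_rate_prod_def)

lemma cust_weight_snoc:
  "cust_weight (xs @ [c]) = cust_weight xs * lam c / (A (Suc (length xs)) * F (xs @ [c]))"
  by (simp add: cust_weight_def type_weight_snoc inv_rate_prod_Suc field_simps)

lemma cust_weight_nonneg: "set xs \<subseteq> {..<K} \<Longrightarrow> cust_weight xs \<ge> 0"
  using type_weight_nonneg inv_rate_prod_pos by (simp add: cust_weight_def less_imp_le)

lemma cust_weight_insert_at_snoc:
  assumes "k \<le> length x"
  shows "cust_weight (insert_at k c (x @ [d]))
    = cust_weight (insert_at k c x) * lam d / (A (Suc (Suc (length x))) * F (x @ [d, c]))"
proof -
  have "insert_at k c (x @ [d]) = insert_at k c x @ [d]"
    using assms by (simp add: insert_at_def)
  moreover have "F (insert_at k c x @ [d]) = F (x @ [d, c])"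
    by (rule arg_cong[where f = real], rule Fnum_cong_set) auto
  ultimately show ?thesis
    using assms by (simp add: cust_weight_snoc)
qed

text \<open>Flow out of x by arrivals of type c balances flow into x by services of a type c
  customer inserted at position k; the k-th term counts the servers compatible with c but
  not with the first k customers, so F telescopes.\<close>
lemma arrival_telescope:
  assumes "set x \<subseteq> {..<K}" and "c < K"
  shows "A (Suc (length x)) * (\<Sum>k\<le>length x.
      cust_weight (insert_at k c x) * (F (take k x @ [c]) - F (take k x))) = lam c * cust_weight x"
  using assms(1)
proof (induction x rule: rev_induct)
  case Nil
  have "F [c] > 0" "A 1 > 0" using F_pos A_pos assms(2) by auto
  then show ?case by (simp add: insert_at_def cust_weight_snoc[of "[]", simplified])
next
  case (snoc d x)
  define n where "n = length x"
  define \<Sigma> where "\<Sigma> = (\<Sum>k\<le>n. cust_weight (insert_at k c x) * (F (take k x @ [c]) - F (take k x)))"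
  have pos: "F (x @ [d, c]) > 0" "F (x @ [d]) > 0" "A (Suc n) > 0" "A (Suc (Suc n)) > 0"
    using F_pos snoc.prems assms(2) A_pos by auto
  have IH: "\<Sigma> = lam c * cust_weight x / A (Suc n)"
    using snoc pos by (simp add: \<Sigma>_def n_def field_simps)
  have "(\<Sum>k\<le>Suc n. cust_weight (insert_at k c (x @ [d]))
        * (F (take k (x @ [d]) @ [c]) - F (take k (x @ [d]))))
      = \<Sigma> * (lam d / (A (Suc (Suc n)) * F (x @ [d, c])))
        + cust_weight (x @ [d, c]) * (F (x @ [d, c]) - F (x @ [d]))"
    unfolding \<Sigma>_def sum_distrib_right sum.atMost_Suc
    by (intro arg_cong2[where f = "(+)"] sum.cong)
      (simp_all add: cust_weight_insert_at_snoc n_def insert_at_length[of "x @ [d]", simplified])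
  also have "\<dots> = lam c * cust_weight (x @ [d]) / A (Suc (Suc n))"
    using pos unfolding IH cust_weight_snoc[of "x @ [d]", simplified] cust_weight_snoc[of x d]
    by (simp add: n_def field_simps)
  finally show ?case
    using pos by (simp add: n_def field_simps)
qed

lemma service_partial_balance:
  assumes "x \<noteq> []" and "set x \<subseteq> {..<K}"
  shows "cust_weight (butlast x) * lam (last x) = cust_weight x * A (length x) * F x"
proof -
  have "F x > 0" "A (length x) > 0"
    using F_pos A_pos assms by (auto simp: Suc_le_eq)
  moreover have "cust_weight x = cust_weight (butlast x) * lam (last x) / (A (length x) * F x)"
    using cust_weight_snoc[of "butlast x" "last x"] assms(1) by simp
  ultimately show ?thesis by simp
qed

lemma arrival_partial_balance:
  assumes "set x \<subseteq> {..<K}"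
  shows "(\<Sum>y \<in> {y \<in> lists {..<K}. length y = Suc (length x)}.
      cust_weight y * A (length y) * real (card {s \<in> S. serve cp s y = Some x}))
    = (\<Sum>c<K. lam c) * cust_weight x"
  using sum_service_inflow[OF finite_S assms, of cust_weight A] arrival_telescope[OF assms]
  by (simp add: sum_distrib_left sum_distrib_right)

lemma balance_holds_cust_weight: "balance_holds K lam A S cp cust_weight"
  unfolding balance_holds_def
proof (intro ballI, goal_cases)
  case (1 x)
  then have x: "set x \<subseteq> {..<K}" by auto
  have "(if x = [] then 0 else cust_weight (butlast x) * lam (last x)) = cust_weight x * A (length x) * F x"
    using service_partial_balance[OF _ x] by auto
  then show ?case
    using arrival_partial_balance[OF x] unfolding card_serve_neq_None by (simp add: algebra_simps)
qed

subsection \<open>Aggregation over token states\<close>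

definition token_weight :: "(nat \<times> nat) list \<Rightarrow> real" where
  "token_weight ts = (\<Prod>j<length ts. lam (fst (ts ! j)) / Lam lam ts (Suc j)
      * (Lam lam ts (Suc j) / F (map fst (take (Suc j) ts))) ^ (snd (ts ! j) + 1))"

lemma weight_eq_token_weight:
  "weight lam A S cp ts = token_weight ts * inv_rate_prod (length ts + sum_list (map snd ts))"
proof -
  have "(\<Prod>j \<in> {1..length ts}. lam (fst (ts ! (j - 1))) / (A j * Lam lam ts j)
        * (Lam lam ts j / F (map fst (take j ts))) ^ (snd (ts ! (j - 1)) + 1))
      = (\<Prod>j<length ts. (lam (fst (ts ! j)) / Lam lam ts (Suc j)
        * (Lam lam ts (Suc j) / F (map fst (take (Suc j) ts))) ^ (snd (ts ! j) + 1)) * (1 / A (Suc j)))"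
    unfolding One_nat_def prod.atLeast1_atMost_eq
    by (rule prod.cong) (simp_all add: divide_inverse inverse_mult_distrib mult_ac)
  also have "\<dots> = token_weight ts * inv_rate_prod (length ts)"
    by (simp only: token_weight_def inv_rate_prod_def One_nat_def prod.atLeast1_atMost_eq prod.distrib)
  finally show ?thesis
    unfolding weight_def by (simp add: inv_rate_prod_add[unfolded One_nat_def] mult.assoc)
qed

lemma token_weight_snoc:
  "token_weight (ts @ [(T, m)]) = token_weight ts * (lam T / (Lam lam ts (length ts) + lam T)
     * ((Lam lam ts (length ts) + lam T) / F (map fst ts @ [T])) ^ (m + 1))"
proof -
  define g where "g j = lam (fst ((ts @ [(T, m)]) ! j)) / Lam lam (ts @ [(T, m)]) (Suc j)
      * (Lam lam (ts @ [(T, m)]) (Suc j) / F (map fst (take (Suc j) (ts @ [(T, m)]))))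
        ^ (snd ((ts @ [(T, m)]) ! j) + 1)" for j
  have "token_weight (ts @ [(T, m)]) = (\<Prod>j<length ts. g j) * g (length ts)"
    unfolding token_weight_def g_def[symmetric] by simp
  moreover have "(\<Prod>j<length ts. g j) = token_weight ts"
    unfolding token_weight_def g_def by (intro prod.cong) (auto simp: nth_append Lam_append_le)
  ultimately show ?thesis
    using Lam_snoc_length[of lam ts "(T, m)"] by (simp add: g_def)
qed

lemma sum_type_weight_new_token:
  assumes "T \<notin> fst ` set ts" and "T < K"
  shows "sum type_weight (token_fibre K (ts @ [(T, 0)]))
    = sum type_weight (token_fibre K ts) * lam T / F (map fst ts @ [T])"
proof -
  have "inj_on (\<lambda>xs. xs @ [T]) (token_fibre K ts)" by (auto intro: inj_onI)
  then have "sum type_weight (token_fibre K (ts @ [(T, 0)])) = (\<Sum>xs \<in> token_fibre K ts. type_weight (xs @ [T]))"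
    by (simp add: token_fibre_new_token[OF assms] sum.reindex)
  also have "\<dots> = (\<Sum>xs \<in> token_fibre K ts. type_weight xs * lam T / F (map fst ts @ [T]))"
  proof (intro sum.cong refl)
    fix xs assume "xs \<in> token_fibre K ts"
    then have "F (xs @ [T]) = F (map fst ts @ [T])"
      by (intro arg_cong[where f = real] Fnum_cong_set) (simp add: set_token_fibre)
    then show "type_weight (xs @ [T]) = type_weight xs * lam T / F (map fst ts @ [T])"
      by (simp add: type_weight_snoc)
  qed
  finally show ?thesis by (simp add: sum_distrib_right sum_divide_distrib)
qed

lemma sum_type_weight_extend_block:
  assumes "ts @ [(T, m)] \<in> token_states K"
  shows "sum type_weight (token_fibre K (ts @ [(T, Suc m)]))
    = sum type_weight (token_fibre K (ts @ [(T, m)]))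
      * (Lam lam ts (length ts) + lam T) / F (map fst ts @ [T])"
proof -
  let ?C = "fst ` set (ts @ [(T, m)])"
  let ?fib = "token_fibre K (ts @ [(T, m)])"
  have "inj_on (\<lambda>(xs, c). xs @ [c]) (?fib \<times> ?C)" by (auto intro: inj_onI)
  moreover have "?C \<subseteq> {..<K}" using assms by (auto simp: token_states_def)
  ultimately have "sum type_weight (token_fibre K (ts @ [(T, Suc m)]))
      = (\<Sum>xs \<in> ?fib. \<Sum>c \<in> ?C. type_weight (xs @ [c]))"
    by (simp add: token_fibre_extend_block sum.reindex sum.cartesian_product split_def)
  also have "\<dots> = (\<Sum>xs \<in> ?fib. type_weight xs * (\<Sum>c \<in> ?C. lam c) / F (map fst ts @ [T]))"
  proof (intro sum.cong refl)
    fix xs assume "xs \<in> ?fib"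
    then have "F (xs @ [c]) = F (map fst ts @ [T])" if "c \<in> ?C" for c
      using that by (intro arg_cong[where f = real] Fnum_cong_set) (auto simp: set_token_fibre)
    then show "(\<Sum>c \<in> ?C. type_weight (xs @ [c])) = type_weight xs * (\<Sum>c \<in> ?C. lam c) / F (map fst ts @ [T])"
      by (simp add: type_weight_snoc sum_distrib_left sum_divide_distrib)
  qed
  also have "(\<Sum>c \<in> ?C. lam c) = Lam lam ts (length ts) + lam T"
    using Lam_length_eq_sum_tokens[of "ts @ [(T, m)]" lam] Lam_snoc_length[of lam ts "(T, m)"] assms
    by (simp add: token_states_def)
  finally show ?thesis by (simp add: sum_distrib_right sum_divide_distrib)
qed

lemma sum_type_weight_token_fibre:
  "ts \<in> token_states K \<Longrightarrow> sum type_weight (token_fibre K ts) = token_weight ts"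
proof (induction ts rule: rev_induct)
  case Nil
  then show ?case by (simp add: token_fibre_Nil token_weight_def)
next
  case (snoc p ts)
  obtain T m where p: "p = (T, m)" by fastforce
  from snoc.prems have ts: "ts \<in> token_states K" and T: "T \<notin> fst ` set ts" "T < K"
    by (auto simp: token_states_def p)
  define L where "L = Lam lam ts (length ts) + lam T"
  define F' where "F' = F (map fst ts @ [T])"
  have "(\<Sum>c \<in> fst ` set ts. lam c) \<ge> 0"
    using ts lam_pos by (intro sum_nonneg) (force simp: token_states_def less_imp_le)
  then have "L > 0"
    using Lam_length_eq_sum_tokens[of ts lam] ts lam_pos[OF \<open>T < K\<close>]
    by (simp add: L_def token_states_def)
  have "F' > 0" using F_pos ts T by (auto simp: F'_def token_states_def)
  have "sum type_weight (token_fibre K (ts @ [(T, k)])) = token_weight (ts @ [(T, k)])" for k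
  proof (induction k)
    case 0
    show ?case
      using \<open>L > 0\<close> \<open>F' > 0\<close> snoc.IH[OF ts]
      by (simp add: sum_type_weight_new_token[OF T] token_weight_snoc flip: L_def F'_def)
  next
    case (Suc k)
    have "ts @ [(T, k)] \<in> token_states K" using snoc.prems by (simp add: token_states_def p)
    then show ?case
      using Suc.IH by (simp add: sum_type_weight_extend_block token_weight_snoc flip: L_def F'_def)
  qed
  then show ?case by (simp add: p)
qed

lemma sum_cust_weight_token_fibre:
  assumes "ts \<in> token_states K"
  shows "sum cust_weight (token_fibre K ts) = weight lam A S cp ts"
proof -
  have "sum cust_weight (token_fibre K ts)
      = (\<Sum>xs \<in> token_fibre K ts. type_weight xs * inv_rate_prod (length ts + sum_list (map snd ts)))"
    by (intro sum.cong) (auto simp: cust_weight_def token_fibre_def length_eq_token_state)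
  then show ?thesis
    by (simp add: weight_eq_token_weight sum_type_weight_token_fibre[OF assms] flip: sum_distrib_right)
qed

lemma has_sum_cust_weight:
  assumes "weight lam A S cp summable_on token_states K"
  shows "(cust_weight has_sum infsum (weight lam A S cp) (token_states K)) (lists {..<K})"
  unfolding lists_eq_Union_token_fibre
proof (rule has_sum_Union_disjoint_family[OF _ assms _ disjoint_family_token_fibre])
  show "(cust_weight has_sum weight lam A S cp ts) (token_fibre K ts)" if "ts \<in> token_states K" for ts
    using sum_cust_weight_token_fibre[OF that] has_sum_finite[OF finite_token_fibre] by metis
  show "0 \<le> cust_weight xs" if "xs \<in> token_fibre K ts" for ts xs
    using that by (intro cust_weight_nonneg) (auto simp: token_fibre_def)
qed

end

theorem mainTheorem12:
  fixes K :: nat and lam :: "nat \<Rightarrow> real" and A :: "nat \<Rightarrow> real"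
    and S :: "'s set" and cp :: "'s \<Rightarrow> nat \<Rightarrow> bool"
  assumes finS: "finite S"
    and lam_pos: "\<forall>c<K. lam c > 0"
    and A_pos: "\<forall>n\<ge>1. A n > 0"
    and F_pos: "\<forall>Ts. Ts \<noteq> [] \<and> set Ts \<subseteq> {..<K} \<longrightarrow> Fnum S cp Ts > 0"
    and finite_norm: "weight lam A S cp summable_on token_states K"
  shows "\<exists>p. stationary_dist K lam A S cp p \<and>
           (\<forall>ts \<in> token_states K.
              (\<Sum>xs \<in> {xs \<in> lists {..<K}. token_state xs = ts}. p xs)
              = (1 / infsum (weight lam A S cp) (token_states K))
                * weight lam A S cp ts)"
proof -
  interpret fcfs_matching K lam A S cp
    by unfold_locales (use assms in auto)
  define Z where "Z = infsum (weight lam A S cp) (token_states K)"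
  have sum: "(cust_weight has_sum Z) (lists {..<K})"
    unfolding Z_def by (rule has_sum_cust_weight[OF finite_norm])
  have nonneg: "\<forall>x \<in> lists {..<K}. 0 \<le> cust_weight x"
    by (auto intro: cust_weight_nonneg)
  have "1 \<le> Z"
    using has_sum_mono2[OF has_sum_finite[of "{[]}" cust_weight] sum] nonneg by auto
  then have "stationary_dist K lam A S cp (\<lambda>x. cust_weight x / Z)"
    by (intro stationary_dist_normalise nonneg sum balance_holds_cust_weight) simp
  moreover have "(\<Sum>xs \<in> {xs \<in> lists {..<K}. token_state xs = ts}. cust_weight xs / Z)
      = 1 / Z * weight lam A S cp ts" if "ts \<in> token_states K" for ts
    using sum_cust_weight_token_fibre[OF that]
    by (simp add: token_fibre_def sum_divide_distrib[symmetric])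
  ultimately show ?thesis
    unfolding Z_def by blast
qed

end
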